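(* For all integers $k,f,n$ with $1\le k\le f-1$ and $f\le n-1$, $\mathrm{Cons}(n,f)$ is not ${}^cC$-reducible to $k\text{-TAg}(n,f)$ (in particular, it is not $C$-reducible to $k\text{-TAg}(n,f)$).
   Context: Model: a finite set of processes runs an asynchronous algorithm communicating by reliable message passing with unbounded delays and speeds; processes fail only by crashing. Time is $\mathcal T=\mathbb N$; a failure pattern $F$ for $\Pi$ is a nondecreasing map $\mathcal T\to2^\Pi$, $Faulty(F)=\bigcup_tF(t)$. A binary agreement problem $P$ for $\Pi$ maps each $(F,\vec V)$, $\vec V\in\{0,1\}^\Pi$, to a nonempty $P(F,\vec V)\subseteq\{0,1\}$; a task is $T=(P,f)$. An algorithm solves $T$ if in every run with $|Faulty(F)|\le f$ and initial values $\vec V$: every correct process eventually decides, decisions are irrevocable, no two processes decide differently, and decisions lie in $P(F,\vec V)$. $k\text{-TAg}_\Pi(F,\vec V)=\{0\}$ if at least $k$ entries of $\vec V$ are $0$; $=\{1\}$ if $\vec V$ is all-ones and $|Faulty(F)|\le k-1$; $=\{0,1\}$ otherwise; $k\text{-TAg}(\Pi,f)=(k\text{-TAg}_\Pi,f)$; $k\text{-TAg}(n,f)$ and $\mathrm{Cons}(n,f)=n\text{-TAg}(n,f)$ are the versions for $\Pi=\{1,\dots,n\}$. Oracles: for $T=(P,f)$ on $\Pi$, an $f$-resilient oracle suitable for $P$ is a black box with consultants $\Pi$ whose history is a sequence of successive consultations, in each of which every consultant may submit at most one query in $\{0,1\}$ and the oracle returns a common response $d$ with $d\in P(F,\vec V)$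 for every $\vec V$ extending the partial query vector (the oracle may use the whole failure pattern, including future crashes), and every correct querier gets the response whenever at least $|\Pi|-f$ consultants query; $\mathcal O.T$ is the most general such oracle. It is consistent if, in every history, for any two consultations with query vectors $\vec W_1\supseteq\vec W_2$, answering $d$ on $\vec W_2$ implies answering $d$ on $\vec W_1$; ${}^c\mathcal O.T$ is the most general consistent one. $T_1\le_C T_2$ (resp. $T_1\le_{{}^cC}T_2$) means there is an algorithm solving $T_1$ whose processes may additionally consult the oracle $\mathcal O.T_2$ (resp. ${}^c\mathcal O.T_2$); $C$-reducibility implies ${}^cC$-reducibility. *)

theory Defs
  imports Main
begin

text \<open>Binary values: False = 0, True = 1.\<close>

type_synonym fpattern = "nat \<Rightarrow> nat set"
type_synonym problem = "fpattern \<Rightarrow> (nat \<Rightarrow> bool) \<Rightarrow> bool set"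
type_synonym task = "problem \<times> nat"

definition Faulty :: "fpattern \<Rightarrow> nat set" where
  "Faulty F = (\<Union>t. F t)"

definition failure_pattern :: "nat set \<Rightarrow> fpattern \<Rightarrow> bool" where
  "failure_pattern \<Pi> F \<longleftrightarrow> mono F \<and> (\<forall>t. F t \<subseteq> \<Pi>)"

definition kTAg :: "nat set \<Rightarrow> nat \<Rightarrow> problem" where
  "kTAg \<Pi> k F V =
     (if k \<le> card {p \<in> \<Pi>. \<not> V p} then {False}
      else if (\<forall>p\<in>\<Pi>. V p) \<and> card (Faulty F) \<le> k - 1 then {True}
      else {False, True})"

definition kTAg_task :: "nat set \<Rightarrow> nat \<Rightarrow> nat \<Rightarrow> task" where
  "kTAg_task \<Pi> k f = (kTAg \<Pi> k, f)"

definition Cons :: "nat \<Rightarrow> nat \<Rightarrow> task" where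
  "Cons n f = kTAg_task {1..n} n f"

text \<open>A step takes an input (nothing,
  a message from a sender, or an oracle response for a consultation), and yields
  a new state, a list of messages (destination, content) to send, and possibly a
  query.  The i-th query of a process (counting from 0) belongs to consultation i.\<close>

datatype 'm input = NoIn | InMsg nat 'm | InResp nat bool

record ('s, 'm) alg =
  ini :: "nat \<Rightarrow> bool \<Rightarrow> 's"
  step_fn :: "nat \<Rightarrow> 's \<Rightarrow> 'm input \<Rightarrow> 's \<times> (nat \<times> 'm) list \<times> bool option"
  decision :: "'s \<Rightarrow> bool option"

type_synonym 'm schedule = "nat \<Rightarrow> (nat \<times> 'm input) option"

primrec exec :: "('s,'m) alg \<Rightarrow> (nat \<Rightarrow> bool) \<Rightarrow> 'm schedule \<Rightarrow> nat \<Rightarrow> nat \<Rightarrow> 's" where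
  "exec A V S 0 = (\<lambda>p. ini A p (V p))"
| "exec A V S (Suc t) = (case S t of None \<Rightarrow> exec A V S t
     | Some (p, e) \<Rightarrow> (exec A V S t)(p := fst (step_fn A p (exec A V S t p) e)))"

definition sent :: "('s,'m) alg \<Rightarrow> (nat \<Rightarrow> bool) \<Rightarrow> 'm schedule \<Rightarrow> nat \<Rightarrow> (nat \<times> 'm) list" where
  "sent A V S t = (case S t of None \<Rightarrow> []
     | Some (p, e) \<Rightarrow> fst (snd (step_fn A p (exec A V S t p) e)))"

definition qout :: "('s,'m) alg \<Rightarrow> (nat \<Rightarrow> bool) \<Rightarrow> 'm schedule \<Rightarrow> nat \<Rightarrow> bool option" where
  "qout A V S t = (case S t of None \<Rightarrow> None
     | Some (p, e) \<Rightarrow> snd (snd (step_fn A p (exec A V S t p) e)))"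

definition steps_at :: "'m schedule \<Rightarrow> nat \<Rightarrow> nat \<Rightarrow> bool" where
  "steps_at S p t \<longleftrightarrow> (\<exists>e. S t = Some (p, e))"

definition nq :: "('s,'m) alg \<Rightarrow> (nat \<Rightarrow> bool) \<Rightarrow> 'm schedule \<Rightarrow> nat \<Rightarrow> nat \<Rightarrow> nat" where
  "nq A V S p t = card {t'. t' < t \<and> steps_at S p t' \<and> qout A V S t' \<noteq> None}"

definition queried :: "('s,'m) alg \<Rightarrow> (nat \<Rightarrow> bool) \<Rightarrow> 'm schedule \<Rightarrow> nat \<Rightarrow> nat \<Rightarrow> bool \<Rightarrow> nat \<Rightarrow> bool" where
  "queried A V S p c v t \<longleftrightarrow> steps_at S p t \<and> qout A V S t = Some v \<and> nq A V S p t = c"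

definition Qv :: "('s,'m) alg \<Rightarrow> (nat \<Rightarrow> bool) \<Rightarrow> 'm schedule \<Rightarrow> nat \<Rightarrow> nat \<Rightarrow> bool option" where
  "Qv A V S c p = (if \<exists>v t. queried A V S p c v t
                   then Some (THE v. \<exists>t. queried A V S p c v t) else None)"

definition recv_at :: "'m schedule \<Rightarrow> nat \<Rightarrow> bool" where
  "recv_at S t \<longleftrightarrow> (\<exists>p q m. S t = Some (p, InMsg q m))"

text \<open>Admissible runs of algorithm A, with failure pattern F, initial values V,
  schedule S, oracle history resp (common response of each consultation, if any;
  the oracle is the most general consistent f-resilient oracle suitable for P),
  and M matching each message reception to the send event (time, index) it
  delivers.\<close>
definition admissible ::
  "('s,'m) alg \<Rightarrow> nat set \<Rightarrow> problem \<Rightarrow> nat \<Rightarrow> fpattern \<Rightarrow> (nat \<Rightarrow> bool) \<Rightarrow>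
   'm schedule \<Rightarrow> (nat \<Rightarrow> bool option) \<Rightarrow> (nat \<Rightarrow> nat \<times> nat) \<Rightarrow> bool" where
  "admissible A \<Pi> P f F V S resp M \<longleftrightarrow>
     \<comment> \<open>only alive processes of \<Pi> take steps\<close>
     (\<forall>t p e. S t = Some (p, e) \<longrightarrow> p \<in> \<Pi> \<and> p \<notin> F t)
     \<comment> \<open>correct processes take infinitely many steps\<close>
   \<and> (\<forall>p \<in> \<Pi> - Faulty F. \<forall>t. \<exists>t' \<ge> t. steps_at S p t')
     \<comment> \<open>every received message was sent earlier to the receiver\<close>
   \<and> (\<forall>t p q m. S t = Some (p, InMsg q m) \<longrightarrow>
        fst (M t) < t \<and> steps_at S q (fst (M t)) \<and>
        snd (M t) < length (sent A V S (fst (M t))) \<and>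
        sent A V S (fst (M t)) ! snd (M t) = (p, m))
     \<comment> \<open>no message is received twice\<close>
   \<and> (\<forall>t1 t2. recv_at S t1 \<and> recv_at S t2 \<and> M t1 = M t2 \<longrightarrow> t1 = t2)
     \<comment> \<open>reliable channels: every message sent to a correct process is received\<close>
   \<and> (\<forall>t' i. i < length (sent A V S t') \<and> fst (sent A V S t' ! i) \<in> \<Pi> - Faulty F \<longrightarrow>
        (\<exists>t. recv_at S t \<and> M t = (t', i)))
     \<comment> \<open>oracle responses are delivered only to queriers, after their query, at most once,
         and equal the common response of the consultation\<close>
   \<and> (\<forall>t p c d. S t = Some (p, InResp c d) \<longrightarrow>
        resp c = Some d \<and> (\<exists>t' < t. \<exists>v. queried A V S p c v t') \<and>
        (\<forall>t'' d'. S t'' = Some (p, InResp c d') \<longrightarrow> t'' = t))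
     \<comment> \<open>suitability for P\<close>
   \<and> (\<forall>c d. resp c = Some d \<longrightarrow>
        (\<forall>W. (\<forall>p\<in>\<Pi>. \<forall>v. Qv A V S c p = Some v \<longrightarrow> W p = v) \<longrightarrow> d \<in> P F W))
     \<comment> \<open>f-resilience\<close>
   \<and> (\<forall>c. card {p \<in> \<Pi>. Qv A V S c p \<noteq> None} \<ge> card \<Pi> - f \<longrightarrow>
        (\<exists>d. resp c = Some d \<and>
           (\<forall>p \<in> \<Pi> - Faulty F. Qv A V S c p \<noteq> None \<longrightarrow> (\<exists>t. S t = Some (p, InResp c d)))))
     \<comment> \<open>consistency\<close>
   \<and> (\<forall>c1 c2 d. (\<forall>p\<in>\<Pi>. Qv A V S c2 p \<noteq> None \<longrightarrow> Qv A V S c1 p = Qv A V S c2 p)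
        \<and> resp c2 = Some d \<longrightarrow> resp c1 = Some d)"

text \<open>A solves T1 using the most general consistent oracle for T2
  (witnessing \<open>T1 \<le>_{cC} T2\<close>).\<close>
definition solves_with_consistent_oracle ::
  "('s,'m) alg \<Rightarrow> nat set \<Rightarrow> task \<Rightarrow> task \<Rightarrow> bool" where
  "solves_with_consistent_oracle A \<Pi> T1 T2 \<longleftrightarrow>
    (\<forall>F V S resp M.
       failure_pattern \<Pi> F \<and> card (Faulty F) \<le> snd T1 \<and>
       admissible A \<Pi> (fst T2) (snd T2) F V S resp M \<longrightarrow>
         (\<forall>p \<in> \<Pi> - Faulty F. \<exists>t. decision A (exec A V S t p) \<noteq> None)
       \<and> (\<forall>p\<in>\<Pi>. \<forall>t t' d. t \<le> t' \<and> decision A (exec A V S t p) = Some d \<longrightarrow>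
             decision A (exec A V S t' p) = Some d)
       \<and> (\<forall>p\<in>\<Pi>. \<forall>q\<in>\<Pi>. \<forall>t t' d d'. decision A (exec A V S t p) = Some d \<and>
             decision A (exec A V S t' q) = Some d' \<longrightarrow> d = d')
       \<and> (\<forall>p\<in>\<Pi>. \<forall>t d. decision A (exec A V S t p) = Some d \<longrightarrow> d \<in> fst T1 F V))"

end

theory Submission
  imports Defs "HOL-Library.Countable"
begin

text \<open>Let the processes \<open>1..k\<close> crash at time 0.  Then at least \<open>k\<close> processes are faulty, so
  \<open>k\<close>-threshold agreement allows the answer \<open>False\<close> whatever the queries are, and the oracle
  that always answers \<open>False\<close> is suitable, consistent and \<open>f\<close>-resilient.  An algorithm reducing
  consensus to \<open>k\<close>-threshold agreement would thus solve consensus among the \<open>n - k \<ge> 2\<close>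
  remaining processes without any useful oracle, tolerating one further crash since \<open>k < f\<close>.
  This contradicts the FLP argument: some initial configuration is bivalent, every bivalent
  history can be extended to a bivalent one ending with any given enabled event, and dovetailing
  these extensions yields a fair run in which no process ever decides.\<close>

section \<open>Events and configurations\<close>

datatype event = Idle nat | Recv nat nat nat nat | Answer nat nat

instance event :: countable by countable_datatype

fun actor :: "event \<Rightarrow> nat" where
  "actor (Idle p) = p"
| "actor (Recv p q l i) = p"
| "actor (Answer p c) = p"

fun msg_key :: "event \<Rightarrow> (nat \<times> nat \<times> nat) option" where
  "msg_key (Recv p q l i) = Some (q, l, i)"
| "msg_key _ = None"

text \<open>\<open>clock c q\<close> counts the steps of \<open>q\<close>, and \<open>transit c (q, l, i) = Some (p, m)\<close> says that the
  \<open>i\<close>-th message sent by \<open>q\<close> in its step number \<open>l\<close> is \<open>m\<close>, addressed to \<open>p\<close> and not yet received.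
  \<open>Recv p q l i\<close> receives it; \<open>Answer p c\<close> gives \<open>p\<close> the response \<open>False\<close> to its consultation \<open>c\<close>.\<close>

record ('s, 'm) config =
  state :: "nat \<Rightarrow> 's"
  clock :: "nat \<Rightarrow> nat"
  transit :: "nat \<times> nat \<times> nat \<Rightarrow> (nat \<times> 'm) option"
  nqueries :: "nat \<Rightarrow> nat"
  answered :: "nat \<Rightarrow> nat set"

fun input_of :: "('s, 'm) config \<Rightarrow> event \<Rightarrow> 'm input" where
  "input_of c (Idle p) = NoIn"
| "input_of c (Recv p q l i) = InMsg q (snd (the (transit c (q, l, i))))"
| "input_of c (Answer p k) = InResp k False"

fun enabled :: "('s, 'm) config \<Rightarrow> event \<Rightarrow> bool" where
  "enabled c (Idle p) = True"
| "enabled c (Recv p q l i) = (\<exists>m. transit c (q, l, i) = Some (p, m))"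
| "enabled c (Answer p k) = (k < nqueries c p \<and> k \<notin> answered c p)"

definition step_result ::
  "('s, 'm) alg \<Rightarrow> ('s, 'm) config \<Rightarrow> event \<Rightarrow> 's \<times> (nat \<times> 'm) list \<times> bool option" where
  "step_result A c e = step_fn A (actor e) (state c (actor e)) (input_of c e)"

definition step_config :: "('s, 'm) alg \<Rightarrow> ('s, 'm) config \<Rightarrow> event \<Rightarrow> ('s, 'm) config" where
  "step_config A c e = (let p = actor e; r = step_result A c e; out = fst (snd r) in
   \<lparr> state = (state c)(p := fst r),
     clock = (clock c)(p := Suc (clock c p)),
     transit = (\<lambda>x. if fst x = p \<and> fst (snd x) = clock c p \<and> snd (snd x) < length out
                    then Some (out ! snd (snd x))
                    else if msg_key e = Some x then None else transit c x),
     nqueries = (nqueries c)(p := (if snd (snd r) = None then nqueries c p else Suc (nqueries c p))),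
     answered = (case e of Answer _ k \<Rightarrow> (answered c)(p := insert k (answered c p))
                 | _ \<Rightarrow> answered c) \<rparr>)"

definition init_config :: "('s, 'm) alg \<Rightarrow> (nat \<Rightarrow> bool) \<Rightarrow> ('s, 'm) config" where
  "init_config A V = \<lparr> state = (\<lambda>p. ini A p (V p)), clock = (\<lambda>_. 0), transit = (\<lambda>_. None),
      nqueries = (\<lambda>_. 0), answered = (\<lambda>_. {}) \<rparr>"

definition run :: "('s, 'm) alg \<Rightarrow> ('s, 'm) config \<Rightarrow> event list \<Rightarrow> ('s, 'm) config" where
  "run A c es = foldl (step_config A) c es"

fun enabled_run :: "('s, 'm) alg \<Rightarrow> nat set \<Rightarrow> ('s, 'm) config \<Rightarrow> event list \<Rightarrow> bool" where
  "enabled_run A P c [] = True"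
| "enabled_run A P c (e # es) = (actor e \<in> P \<and> enabled c e \<and> enabled_run A P (step_config A c e) es)"

definition transit_from_past :: "('s, 'm) config \<Rightarrow> bool" where
  "transit_from_past c \<longleftrightarrow> (\<forall>q l i. transit c (q, l, i) \<noteq> None \<longrightarrow> l < clock c q)"

lemma run_Nil [simp]: "run A c [] = c"
  by (simp add: run_def)

lemma run_Cons [simp]: "run A c (e # es) = run A (step_config A c e) es"
  by (simp add: run_def)

lemma run_append [simp]: "run A c (xs @ ys) = run A (run A c xs) ys"
  by (simp add: run_def)

lemma enabled_run_append [simp]:
  "enabled_run A P c (xs @ ys) \<longleftrightarrow> enabled_run A P c xs \<and> enabled_run A P (run A c xs) ys"
  by (induction xs arbitrary: c) auto

lemma enabled_run_mono: "enabled_run A P c xs \<Longrightarrow> P \<subseteq> Q \<Longrightarrow> enabled_run A Q c xs"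
  by (induction xs arbitrary: c) auto

lemma enabled_run_actor: "enabled_run A P c xs \<Longrightarrow> e \<in> set xs \<Longrightarrow> actor e \<in> P"
  by (induction xs arbitrary: c) auto

lemma step_config_simps:
  "state (step_config A c e) = (state c)(actor e := fst (step_result A c e))"
  "clock (step_config A c e) = (clock c)(actor e := Suc (clock c (actor e)))"
  "transit (step_config A c e) x =
     (if fst x = actor e \<and> fst (snd x) = clock c (actor e)
         \<and> snd (snd x) < length (fst (snd (step_result A c e)))
      then Some (fst (snd (step_result A c e)) ! snd (snd x))
      else if msg_key e = Some x then None else transit c x)"
  "nqueries (step_config A c e) = (nqueries c)(actor e :=
     (if snd (snd (step_result A c e)) = None then nqueries c (actor e)
      else Suc (nqueries c (actor e))))"
  "answered (step_config A c e) = (case e of Answer _ k \<Rightarrow>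
     (answered c)(actor e := insert k (answered c (actor e))) | _ \<Rightarrow> answered c)"
  by (simp_all add: step_config_def Let_def)

lemma transit_from_past_init: "transit_from_past (init_config A V)"
  by (simp add: transit_from_past_def init_config_def)

lemma transit_from_pastD: "transit_from_past c \<Longrightarrow> transit c (q, l, i) = Some v \<Longrightarrow> l < clock c q"
  unfolding transit_from_past_def by blast

lemma transit_from_past_step:
  assumes "transit_from_past c"
  shows "transit_from_past (step_config A c e)"
  unfolding transit_from_past_def
proof (intro allI impI)
  fix q l i
  assume sent: "transit (step_config A c e) (q, l, i) \<noteq> None"
  show "l < clock (step_config A c e) q"
  proof (cases "q = actor e \<and> l = clock c (actor e)")
    case True
    then show ?thesis by (simp add: step_config_simps)
  next
    case False
    then obtain v where "transit c (q, l, i) = Some v"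
      using sent by (auto simp: step_config_simps split: if_splits)
    then have "l < clock c q"
      using transit_from_pastD[OF assms] by blast
    then show ?thesis
      by (auto simp: step_config_simps)
  qed
qed

lemma transit_from_past_run: "transit_from_past c \<Longrightarrow> transit_from_past (run A c xs)"
  by (induction xs arbitrary: c) (auto simp: transit_from_past_step)

lemma transit_from_past_reachable: "transit_from_past (run A (init_config A V) h)"
  by (simp add: transit_from_past_run transit_from_past_init)

lemma nqueries_step_mono: "nqueries c q \<le> nqueries (step_config A c e) q"
  by (simp add: step_config_simps)

lemma transit_step_keep:
  assumes "transit c x = Some v" "transit_from_past c" "msg_key e \<noteq> Some x"
  shows "transit (step_config A c e) x = Some v"
proof -
  obtain q l i where x: "x = (q, l, i)"
    by (cases x) auto
  have "l < clock c q"
    using assms transit_from_pastD x by metis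
  then show ?thesis
    using assms x by (auto simp: step_config_simps)
qed

lemma enabled_after_other_event:
  assumes "enabled c e" "enabled c a" "a \<noteq> e" "transit_from_past c"
  shows "enabled (step_config A c a) e"
proof (cases e)
  case (Idle p)
  then show ?thesis by simp
next
  case (Recv p q l i)
  then obtain m where m: "transit c (q, l, i) = Some (p, m)"
    using assms by auto
  have "msg_key a \<noteq> Some (q, l, i)"
  proof
    assume "msg_key a = Some (q, l, i)"
    then obtain p' where a: "a = Recv p' q l i"
      by (cases a) auto
    then have "p' = p"
      using assms(2) m by auto
    then show False
      using a Recv assms(3) by simp
  qed
  then show ?thesis
    using Recv m transit_step_keep[OF m assms(4)] by auto
next
  case (Answer p k)
  have "k \<notin> answered (step_config A c a) p"
    using assms Answer by (cases a) (auto simp: step_config_simps)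
  moreover have "k < nqueries (step_config A c a) p"
    using assms Answer nqueries_step_mono[of c p A a] by auto
  ultimately show ?thesis
    using Answer by simp
qed

lemma enabled_after_run:
  assumes "enabled c e" "enabled_run A P c ys" "e \<notin> set ys" "transit_from_past c"
  shows "enabled (run A c ys) e"
  using assms
proof (induction ys arbitrary: c)
  case Nil
  then show ?case by simp
next
  case (Cons a ys)
  then have "enabled (step_config A c a) e"
    using enabled_after_other_event[of c e a A] by auto
  then show ?case
    using Cons.IH[of "step_config A c a"] Cons.prems transit_from_past_step by auto
qed

lemma msg_key_other_actor:
  assumes "enabled c e" "enabled c a" "actor e \<noteq> actor a"
  shows "msg_key a = None \<or> msg_key e \<noteq> msg_key a"
  using assms by (cases a; cases e) auto

lemma step_result_other_actor:
  assumes "enabled c e" "enabled c a" "actor e \<noteq> actor a" "transit_from_past c"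
  shows "step_result A (step_config A c e) a = step_result A c a"
proof -
  have "input_of (step_config A c e) a = input_of c a"
  proof (cases a)
    case (Recv p q l i)
    then obtain m where m: "transit c (q, l, i) = Some (p, m)"
      using assms by auto
    have "msg_key e \<noteq> Some (q, l, i)"
      using msg_key_other_actor[OF assms(1-3)] Recv by auto
    then show ?thesis
      using Recv m transit_step_keep[OF m assms(4)] by simp
  qed auto
  then show ?thesis
    using assms(3) by (simp add: step_result_def step_config_simps)
qed

lemma step_config_commute:
  assumes "enabled c e" "enabled c a" "actor e \<noteq> actor a" "transit_from_past c"
  shows "step_config A (step_config A c e) a = step_config A (step_config A c a) e"
proof -
  have ra: "step_result A (step_config A c e) a = step_result A c a"
    using step_result_other_actor[OF assms] .
  have re: "step_result A (step_config A c a) e = step_result A c e"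
    using step_result_other_actor[OF assms(2,1) _ assms(4)] assms(3) by auto
  have keys: "msg_key a = None \<or> msg_key e \<noteq> msg_key a" "msg_key e = None \<or> msg_key a \<noteq> msg_key e"
    using msg_key_other_actor[OF assms(1-3)] msg_key_other_actor[OF assms(2,1)] assms(3) by auto
  show ?thesis
  proof (rule config.equality)
    show "transit (step_config A (step_config A c e) a) = transit (step_config A (step_config A c a) e)"
    proof
      fix x :: "nat \<times> nat \<times> nat"
      obtain q l i where x: "x = (q, l, i)"
        by (cases x) auto
      have "transit c x = Some v \<Longrightarrow> l < clock c q" for v
        using assms(4) transit_from_pastD x by metis
      moreover have "msg_key a = Some x \<Longrightarrow> transit c x \<noteq> None"
        using assms(2) by (cases a) auto
      moreover have "msg_key e = Some x \<Longrightarrow> transit c x \<noteq> None"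
        using assms(1) by (cases e) auto
      ultimately show "transit (step_config A (step_config A c e) a) x =
          transit (step_config A (step_config A c a) e) x"
        using ra re assms(3) keys x by (auto simp: step_config_simps)
    qed
  qed (use ra re assms(3) in \<open>auto simp: step_config_simps step_config_def Let_def fun_upd_twist
         split: event.splits\<close>)
qed

lemma run_commute:
  assumes "enabled c e" "transit_from_past c" "enabled_run A P c ws" "actor e \<notin> P"
  shows "enabled (run A c ws) e \<and> enabled_run A P (step_config A c e) ws \<and>
         run A (step_config A c e) ws = step_config A (run A c ws) e"
  using assms
proof (induction ws arbitrary: c)
  case Nil
  then show ?case by simp
next
  case (Cons a ws)
  have a: "actor a \<in> P" "enabled c a" "enabled_run A P (step_config A c a) ws"
    using Cons.prems by auto
  have ne: "actor e \<noteq> actor a" "a \<noteq> e"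
    using a(1) Cons.prems(4) by auto
  have "enabled (step_config A c a) e"
    using enabled_after_other_event[OF Cons.prems(1) a(2) ne(2) Cons.prems(2)] .
  note IH = Cons.IH[OF this transit_from_past_step[OF Cons.prems(2)] a(3) Cons.prems(4)]
  have "enabled (step_config A c e) a"
    using enabled_after_other_event[OF a(2) Cons.prems(1) _ Cons.prems(2)] ne by auto
  then show ?case
    using IH step_config_commute[OF Cons.prems(1) a(2) ne(1) Cons.prems(2)] a(1) ne by simp
qed

lemma runs_commute:
  assumes "enabled_run A P c ws" "enabled_run A Q c zs" "P \<inter> Q = {}" "transit_from_past c"
  shows "enabled_run A Q (run A c ws) zs \<and> enabled_run A P (run A c zs) ws
    \<and> run A (run A c zs) ws = run A (run A c ws) zs"
  using assms(2,4,1)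
proof (induction zs arbitrary: c)
  case Nil
  then show ?case by simp
next
  case (Cons e zs)
  then have e: "actor e \<in> Q" "enabled c e" "enabled_run A Q (step_config A c e) zs"
    by auto
  then have "actor e \<notin> P"
    using assms(3) by auto
  note e_first = run_commute[OF e(2) Cons.prems(2,3) this]
  show ?case
    using Cons.IH[OF e(3) transit_from_past_step[OF Cons.prems(2)]] e_first e(1) by simp
qed

definition set_state :: "('s, 'm) config \<Rightarrow> nat \<Rightarrow> 's \<Rightarrow> ('s, 'm) config" where
  "set_state c p s = c\<lparr>state := (state c)(p := s)\<rparr>"

lemma step_config_set_state:
  assumes "actor e \<noteq> p"
  shows "step_config A (set_state c p s) e = set_state (step_config A c e) p s"
proof -
  have "input_of (set_state c p s) e = input_of c e"
    by (cases e) (auto simp: set_state_def)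
  then have "step_result A (set_state c p s) e = step_result A c e"
    using assms by (simp add: step_result_def set_state_def)
  then show ?thesis
    using assms by (auto simp: step_config_def set_state_def Let_def fun_upd_twist split: event.splits)
qed

lemma run_set_state:
  assumes "enabled_run A P c ys" "p \<notin> P"
  shows "enabled_run A P (set_state c p s) ys \<and> run A (set_state c p s) ys = set_state (run A c ys) p s"
  using assms
proof (induction ys arbitrary: c)
  case Nil
  then show ?case by simp
next
  case (Cons e ys)
  have "enabled (set_state c p s) e = enabled c e"
    by (cases e) (auto simp: set_state_def)
  moreover have "actor e \<noteq> p"
    using Cons.prems by auto
  ultimately show ?case
    using Cons step_config_set_state[of e p A c s] by auto
qed

lemma init_config_update: "init_config A (V(j := b)) = set_state (init_config A V) j (ini A j b)"
  by (simp add: init_config_def set_state_def fun_eq_iff)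

section \<open>Fair executions\<close>

primrec config_at :: "('s, 'm) alg \<Rightarrow> (nat \<Rightarrow> bool) \<Rightarrow> (nat \<Rightarrow> event) \<Rightarrow> nat \<Rightarrow> ('s, 'm) config" where
  "config_at A V E 0 = init_config A V"
| "config_at A V E (Suc t) = step_config A (config_at A V E t) (E t)"

definition fair :: "('s, 'm) alg \<Rightarrow> (nat \<Rightarrow> bool) \<Rightarrow> nat set \<Rightarrow> (nat \<Rightarrow> event) \<Rightarrow> bool" where
  "fair A V X E \<longleftrightarrow> (\<forall>p\<in>X. \<forall>T. \<exists>t\<ge>T. actor (E t) = p)
    \<and> (\<forall>t q l i p m. p \<in> X \<longrightarrow> transit (config_at A V E t) (q, l, i) = Some (p, m) \<longrightarrow>
         (\<exists>t'. E t' = Recv p q l i))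
    \<and> (\<forall>t p c. p \<in> X \<longrightarrow> c < nqueries (config_at A V E t) p \<longrightarrow> (\<exists>t'. E t' = Answer p c))"

lemma config_at_eq_run: "config_at A V E t = run A (init_config A V) (map E [0..<t])"
  by (induction t) auto

lemma config_at_eq_run_take:
  assumes "map E [0..<length h] = h" "t \<le> length h"
  shows "config_at A V E t = run A (init_config A V) (take t h)"
proof -
  have "take t h = map E (take t [0..<length h])"
    using assms(1) by (metis take_map)
  also have "\<dots> = map E [0..<t]"
    using assms(2) by simp
  finally show ?thesis
    by (simp add: config_at_eq_run)
qed

lemma config_at_add:
  assumes "t \<le> T"
  shows "config_at A V E T = run A (config_at A V E t) (map E [t..<T])"
  using assms by (induction T rule: dec_induct) auto

lemma enabled_run_config_at:
  assumes "enabled_run A P (init_config A V) (map E [0..<T])" "t < T"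
  shows "enabled (config_at A V E t) (E t) \<and> actor (E t) \<in> P"
proof -
  have "[0..<T] = [0..<t] @ [t..<T]"
    using assms(2) by (metis le_add_diff_inverse less_imp_le_nat upt_add_eq_append zero_le)
  then have "map E [0..<T] = map E [0..<t] @ E t # map E [Suc t..<T]"
    using assms(2) by (simp add: upt_conv_Cons)
  then show ?thesis
    using assms(1) by (simp add: config_at_eq_run)
qed

lemma transit_from_past_config_at: "transit_from_past (config_at A V E t)"
  by (induction t) (auto simp: transit_from_past_init transit_from_past_step)

lemma config_at_mono:
  assumes "t \<le> T"
  shows "clock (config_at A V E t) q \<le> clock (config_at A V E T) q
    \<and> nqueries (config_at A V E t) q \<le> nqueries (config_at A V E T) q
    \<and> answered (config_at A V E t) q \<subseteq> answered (config_at A V E T) q"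
  using assms
proof (induction T rule: dec_induct)
  case (step T)
  then show ?case
    by (auto simp: step_config_simps split: event.splits)
qed simp

lemma transit_changes_only_by_receipt:
  assumes "\<forall>t. enabled (config_at A V E t) (E t)"
    and "transit (config_at A V E t0) (q, l, i) = Some (p, m)" "t0 \<le> T"
    and "transit (config_at A V E T) (q, l, i) \<noteq> Some (p, m)"
  shows "\<exists>t. t0 \<le> t \<and> t < T \<and> E t = Recv p q l i"
  using assms(3,4)
proof (induction T rule: dec_induct)
  case base
  then show ?case using assms(2) by simp
next
  case (step T)
  show ?case
  proof (cases "transit (config_at A V E T) (q, l, i) = Some (p, m)")
    case False
    then show ?thesis using step by force
  next
    case True
    then have "msg_key (E T) = Some (q, l, i)"
      using transit_step_keep[OF True transit_from_past_config_at, of "E T" A] step.prems by auto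
    then obtain p' where e: "E T = Recv p' q l i"
      by (cases "E T") auto
    then have "p' = p"
      using True assms(1) by (metis config.select_convs(1) enabled.simps(2) option.inject prod.inject)
    then show ?thesis
      using e step by auto
  qed
qed

lemma answered_source:
  assumes "c \<in> answered (config_at A V E T) p"
  shows "\<exists>t<T. E t = Answer p c"
  using assms
proof (induction T)
  case (Suc T)
  then show ?case
    by (cases "E T = Answer p c") (auto simp: step_config_simps less_Suc_eq split: event.splits if_splits)
qed (simp add: init_config_def)

text \<open>Slot \<open>s\<close> serves the event numbered \<open>fst (prod_decode s)\<close>, if it is enabled; so every event
  is served in every round \<open>r\<close>, at the slot \<open>prod_encode (to_nat e, r) \<ge> r\<close>.\<close>

definition scheduled_event :: "nat set \<Rightarrow> ('s, 'm) config \<Rightarrow> nat \<Rightarrow> event" where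
  "scheduled_event X c s = (let e = from_nat (fst (prod_decode s)) in
     if enabled c e \<and> actor e \<in> X then e else Idle (SOME p. p \<in> X))"

lemma scheduled_event_enabled:
  assumes "X \<noteq> {}"
  shows "enabled c (scheduled_event X c s) \<and> actor (scheduled_event X c s) \<in> X"
  using assms some_in_eq[of X] by (auto simp: scheduled_event_def Let_def)

lemma scheduled_event_slot:
  "scheduled_event X c (prod_encode (to_nat e, r)) =
     (if enabled c e \<and> actor e \<in> X then e else Idle (SOME p. p \<in> X))"
  by (simp add: scheduled_event_def)

lemma slot_served:
  assumes served: "\<And>s. \<exists>N\<ge>s. \<exists>t\<ge>s. E t = scheduled_event X (config_at A V E N) s"
  shows "\<exists>N\<ge>r. \<exists>t\<ge>r. enabled (config_at A V E N) e \<longrightarrow> actor e \<in> X \<longrightarrow> E t = e"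
proof -
  let ?s = "prod_encode (to_nat e, r)"
  obtain N t where "?s \<le> N" "?s \<le> t" "E t = scheduled_event X (config_at A V E N) ?s"
    using served by blast
  moreover have "r \<le> ?s"
    by (rule le_prod_encode_2)
  ultimately show ?thesis
    by (intro exI[of _ N] conjI exI[of _ t]) (auto simp: scheduled_event_slot)
qed

lemma fair_if_slots_served:
  assumes enabled: "\<forall>t. enabled (config_at A V E t) (E t)"
    and served: "\<And>s. \<exists>N\<ge>s. \<exists>t\<ge>s. E t = scheduled_event X (config_at A V E N) s"
  shows "fair A V X E"
  unfolding fair_def
proof (intro conjI ballI allI impI)
  fix p T
  assume "p \<in> X"
  then show "\<exists>t\<ge>T. actor (E t) = p"
    using slot_served[OF served, of T "Idle p"] by fastforce
next
  fix t q l i p m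
  assume p: "p \<in> X" and sent: "transit (config_at A V E t) (q, l, i) = Some (p, m)"
  obtain N t' where "t \<le> N"
    "enabled (config_at A V E N) (Recv p q l i) \<longrightarrow> p \<in> X \<longrightarrow> E t' = Recv p q l i"
    using slot_served[OF served, of t "Recv p q l i"] by auto
  then show "\<exists>t'. E t' = Recv p q l i"
    using p transit_changes_only_by_receipt[OF enabled sent, of N] by fastforce
next
  fix t p c
  assume p: "p \<in> X" and queried: "c < nqueries (config_at A V E t) p"
  obtain N t' where "t \<le> N"
    "enabled (config_at A V E N) (Answer p c) \<longrightarrow> p \<in> X \<longrightarrow> E t' = Answer p c"
    using slot_served[OF served, of t "Answer p c"] by auto
  moreover have "c < nqueries (config_at A V E N) p"
    using queried config_at_mono[OF \<open>t \<le> N\<close>, of A V E p] by linarith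
  ultimately show "\<exists>t'. E t' = Answer p c"
    using p answered_source by fastforce
qed

definition list_limit :: "(nat \<Rightarrow> 'a list) \<Rightarrow> nat \<Rightarrow> 'a" where
  "list_limit H t = H (Suc t) ! t"

definition growing_chain :: "(nat \<Rightarrow> 'a list) \<Rightarrow> bool" where
  "growing_chain H \<longleftrightarrow> (\<forall>s. \<exists>zs. zs \<noteq> [] \<and> H (Suc s) = H s @ zs)"

lemma growing_chain_prefix:
  assumes "growing_chain H" "s \<le> s'"
  shows "\<exists>zs. H s' = H s @ zs"
  using assms(2)
proof (induction s' rule: dec_induct)
  case (step s')
  then show ?case
    using assms(1) unfolding growing_chain_def by (metis append.assoc)
qed simp

lemma growing_chain_length:
  assumes "growing_chain H"
  shows "s \<le> length (H s)"
proof (induction s)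
  case (Suc s)
  obtain zs where "zs \<noteq> []" "H (Suc s) = H s @ zs"
    using assms unfolding growing_chain_def by blast
  then show ?case
    using Suc by (cases zs) auto
qed simp

lemma list_limit_nth:
  assumes "growing_chain H" "t < length (H s)"
  shows "list_limit H t = H s ! t"
proof -
  obtain z1 where z1: "H (max s (Suc t)) = H s @ z1"
    using growing_chain_prefix[OF assms(1)] by (meson max.cobounded1)
  obtain z2 where z2: "H (max s (Suc t)) = H (Suc t) @ z2"
    using growing_chain_prefix[OF assms(1)] by (meson max.cobounded2)
  have "t < length (H (Suc t))"
    using growing_chain_length[OF assms(1), of "Suc t"] by simp
  then show ?thesis
    using z1 z2 assms(2) unfolding list_limit_def by (metis nth_append)
qed

lemma map_list_limit:
  assumes "growing_chain H"
  shows "map (list_limit H) [0..<length (H s)] = H s"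
  using assms by (intro nth_equalityI) (auto simp: list_limit_nth)

lemma list_limit_enabled:
  assumes "growing_chain H" "\<And>s. enabled_run A P (init_config A V) (H s)"
  shows "enabled (config_at A V (list_limit H) t) (list_limit H t) \<and> actor (list_limit H t) \<in> P"
proof -
  have "t < length (H (Suc t))"
    using growing_chain_length[OF assms(1), of "Suc t"] by simp
  then show ?thesis
    using enabled_run_config_at assms(2)[of "Suc t"] map_list_limit[OF assms(1)] by metis
qed

lemma list_limit_serves_slot:
  assumes chain: "growing_chain H"
    and "H (Suc s) = H s @ ys @ [scheduled_event X (run A (init_config A V) (H s)) s]"
  shows "\<exists>N\<ge>s. \<exists>t\<ge>s. list_limit H t = scheduled_event X (config_at A V (list_limit H) N) s"
proof -
  let ?t = "length (H s) + length ys"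
  have "config_at A V (list_limit H) (length (H s)) = run A (init_config A V) (H s)"
    by (simp add: config_at_eq_run map_list_limit[OF chain])
  moreover have "list_limit H ?t = scheduled_event X (run A (init_config A V) (H s)) s"
    using list_limit_nth[OF chain, of ?t "Suc s"] assms(2) by (simp add: nth_append)
  ultimately show ?thesis
    using growing_chain_length[OF chain, of s]
    by (intro exI[of _ "length (H s)"] conjI exI[of _ ?t]) simp_all
qed

lemma scheduling_chain_exists:
  assumes X: "X \<noteq> {}" and "Inv h0"
    and extend: "\<And>h e. Inv h \<Longrightarrow> enabled (run A (init_config A V) h) e \<Longrightarrow> actor e \<in> X \<Longrightarrow>
       \<exists>ys. enabled_run A X (run A (init_config A V) h) (ys @ [e]) \<and> Inv (h @ ys @ [e])"
  shows "\<exists>H. H 0 = h0 \<and> growing_chain H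
    \<and> (\<forall>s. Inv (H s) \<and> (\<exists>zs. H s = h0 @ zs \<and> enabled_run A X (run A (init_config A V) h0) zs))
    \<and> (\<forall>s. \<exists>ys. H (Suc s) = H s @ ys @ [scheduled_event X (run A (init_config A V) (H s)) s])"
proof -
  let ?c = "run A (init_config A V)"
  let ?job = "\<lambda>s h. scheduled_event X (?c h) s"
  let ?ok = "\<lambda>s h zs. (\<exists>ys. zs = ys @ [?job s h]) \<and> enabled_run A X (?c h) zs \<and> Inv (h @ zs)"
  define ext where "ext s h = (SOME zs. ?ok s h zs)" for s h
  have ext: "?ok s h (ext s h)" if inv: "Inv h" for s h
  proof -
    obtain ys where "enabled_run A X (?c h) (ys @ [?job s h])" "Inv (h @ ys @ [?job s h])"
      using extend[OF inv] scheduled_event_enabled[OF X] by blast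
    then have "\<exists>zs. ?ok s h zs"
      by blast
    then show ?thesis
      unfolding ext_def by (rule someI_ex)
  qed
  define H where "H = rec_nat h0 (\<lambda>s h. h @ ext s h)"
  have H_Suc: "H (Suc s) = H s @ ext s (H s)" for s
    by (simp add: H_def)
  have H: "Inv (H s) \<and> (\<exists>zs. H s = h0 @ zs \<and> enabled_run A X (?c h0) zs)" for s
  proof (induction s)
    case (Suc s)
    then obtain zs where "H s = h0 @ zs" "enabled_run A X (?c h0) zs" "Inv (H s)"
      by blast
    then show ?case
      using ext[of "H s" s] by (intro conjI exI[of _ "zs @ ext s (H s)"]) (simp_all add: H_Suc)
  qed (simp add: H_def \<open>Inv h0\<close>)
  have step: "\<exists>ys. H (Suc s) = H s @ ys @ [?job s (H s)]" for s
    using ext[of "H s" s] H by (auto simp: H_Suc)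
  then have "growing_chain H"
    unfolding growing_chain_def by (metis append_is_Nil_conv not_Cons_self2)
  then show ?thesis
    using H step by (intro exI[of _ H]) (simp add: H_def)
qed

lemma fair_execution_exists:
  assumes X: "X \<noteq> {}" and h0: "enabled_run A L (init_config A V) h0" "Inv h0"
    and extend: "\<And>h e. Inv h \<Longrightarrow> enabled (run A (init_config A V) h) e \<Longrightarrow> actor e \<in> X \<Longrightarrow>
       \<exists>ys. enabled_run A X (run A (init_config A V) h) (ys @ [e]) \<and> Inv (h @ ys @ [e])"
  shows "\<exists>E. (\<forall>t. enabled (config_at A V E t) (E t))
    \<and> (\<forall>t. actor (E t) \<in> (if t < length h0 then L else X)) \<and> fair A V X E
    \<and> (\<forall>t<length h0. E t = h0 ! t) \<and> (\<forall>T. \<exists>t\<ge>T. Inv (map E [0..<t]))"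
proof -
  obtain H where H: "H 0 = h0" "growing_chain H"
    and H_run: "\<And>s. Inv (H s) \<and> (\<exists>zs. H s = h0 @ zs \<and> enabled_run A X (run A (init_config A V) h0) zs)"
    and step: "\<And>s. \<exists>ys. H (Suc s) = H s @ ys @ [scheduled_event X (run A (init_config A V) (H s)) s]"
    using scheduling_chain_exists[OF X h0(2) extend] by blast
  define E where "E = list_limit H"
  have H_enabled: "enabled_run A (L \<union> X) (init_config A V) (H s)" for s
    using H_run[of s] h0(1) by (auto intro: enabled_run_mono)
  have enabled: "enabled (config_at A V E t) (E t)" for t
    using list_limit_enabled[OF H(2) H_enabled] unfolding E_def by blast
  have actor: "actor (E t) \<in> (if t < length h0 then L else X)" for t
  proof -
    have long: "t < length (H (Suc t))"
      using growing_chain_length[OF H(2), of "Suc t"] by simp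
    obtain zs where zs: "H (Suc t) = h0 @ zs" "enabled_run A X (run A (init_config A V) h0) zs"
      using H_run by blast
    have "E t = (h0 @ zs) ! t"
      using list_limit_nth[OF H(2) long] zs(1) by (simp add: E_def)
    then show ?thesis
      using long zs enabled_run_actor[OF h0(1)] enabled_run_actor[OF zs(2)] by (auto simp: nth_append)
  qed
  have "\<exists>N\<ge>s. \<exists>t\<ge>s. E t = scheduled_event X (config_at A V E N) s" for s
    using step[of s] list_limit_serves_slot[OF H(2)] unfolding E_def by blast
  then have "fair A V X E"
    using fair_if_slots_served enabled by blast
  moreover have "E t = h0 ! t" if "t < length h0" for t
    using list_limit_nth[OF H(2), of t 0] that H(1) by (simp add: E_def)
  moreover have "\<exists>t\<ge>T. Inv (map E [0..<t])" for T
    using H_run[of T] growing_chain_length[OF H(2), of T] map_list_limit[OF H(2), of T] by (auto simp: E_def)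
  ultimately show ?thesis
    using enabled actor by blast
qed

section \<open>Admissible runs with the oracle answering \<open>False\<close>\<close>

definition outbox :: "('s, 'm) alg \<Rightarrow> (nat \<Rightarrow> bool) \<Rightarrow> (nat \<Rightarrow> event) \<Rightarrow> nat \<Rightarrow> (nat \<times> 'm) list" where
  "outbox A V E t = fst (snd (step_result A (config_at A V E t) (E t)))"

definition query_at :: "('s, 'm) alg \<Rightarrow> (nat \<Rightarrow> bool) \<Rightarrow> (nat \<Rightarrow> event) \<Rightarrow> nat \<Rightarrow> bool option" where
  "query_at A V E t = snd (snd (step_result A (config_at A V E t) (E t)))"

lemma transit_source:
  assumes "transit (config_at A V E t) (q, l, i) = Some x"
  shows "\<exists>t'<t. actor (E t') = q \<and> clock (config_at A V E t') q = l
    \<and> i < length (outbox A V E t') \<and> outbox A V E t' ! i = x"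
  using assms
proof (induction t)
  case (Suc t)
  show ?case
  proof (cases "q = actor (E t) \<and> l = clock (config_at A V E t) q \<and> i < length (outbox A V E t)")
    case True
    then show ?thesis
      using Suc.prems by (auto simp: step_config_simps outbox_def)
  next
    case False
    then have "transit (config_at A V E t) (q, l, i) = Some x"
      using Suc.prems by (auto simp: step_config_simps outbox_def split: if_splits)
    then show ?thesis
      using Suc.IH less_Suc_eq by blast
  qed
qed (simp add: init_config_def)

lemma transit_outbox:
  assumes "i < length (outbox A V E t)"
  shows "transit (config_at A V E (Suc t)) (actor (E t), clock (config_at A V E t) (actor (E t)), i) =
    Some (outbox A V E t ! i)"
  using assms by (simp add: step_config_simps outbox_def)

lemma clock_strict_mono:
  assumes "t1 < t2" "actor (E t1) = q"
  shows "clock (config_at A V E t1) q < clock (config_at A V E t2) q"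
proof -
  have "clock (config_at A V E (Suc t1)) q = Suc (clock (config_at A V E t1) q)"
    using assms(2) by (simp add: step_config_simps)
  then show ?thesis
    using config_at_mono[of "Suc t1" t2 A V E q] assms(1) by simp
qed

lemma clock_inj:
  assumes "actor (E t1) = q" "actor (E t2) = q"
    and "clock (config_at A V E t1) q = clock (config_at A V E t2) q"
  shows "t1 = t2"
  using clock_strict_mono[of t1 t2 E q A V] clock_strict_mono[of t2 t1 E q A V] assms
  by (metis less_irrefl nat_neq_iff)

lemma transit_removed_by_receipt:
  assumes "E t = Recv p q l i" "transit (config_at A V E t) (q, l, i) \<noteq> None" "t < T"
  shows "transit (config_at A V E T) (q, l, i) = None"
proof -
  have sent: "l < clock (config_at A V E t) q"
    using assms(2) transit_from_past_config_at transit_from_pastD by blast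
  have "Suc t \<le> T"
    using assms(3) by simp
  then show ?thesis
  proof (induction T rule: dec_induct)
    case base
    then show ?case
      using assms(1) sent by (auto simp: step_config_simps)
  next
    case (step T)
    have "l < clock (config_at A V E T) q"
      using sent config_at_mono[of t T A V E q] step(1) by linarith
    then show ?case
      using step by (auto simp: step_config_simps)
  qed
qed

lemma query_source:
  assumes "c < nqueries (config_at A V E t) p"
  shows "\<exists>t'<t. actor (E t') = p \<and> query_at A V E t' \<noteq> None \<and> nqueries (config_at A V E t') p = c"
  using assms
proof (induction t)
  case (Suc t)
  show ?case
  proof (cases "c < nqueries (config_at A V E t) p")
    case True
    then show ?thesis
      using Suc.IH less_Suc_eq by blast
  next
    case False
    then have "actor (E t) = p \<and> query_at A V E t \<noteq> None \<and> nqueries (config_at A V E t) p = c"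
      using Suc.prems by (auto simp: step_config_simps query_at_def split: if_splits)
    then show ?thesis
      by blast
  qed
qed (simp add: init_config_def)

lemma False_in_kTAg:
  assumes "k \<le> card (Faulty F)"
  shows "False \<in> kTAg \<Pi> k F W"
  using assms by (cases "k = 0") (auto simp: kTAg_def)

locale fair_execution =
  fixes A :: "('s, 'm) alg" and V :: "nat \<Rightarrow> bool" and E :: "nat \<Rightarrow> event"
    and \<Pi> L X :: "nat set" and T0 :: nat
  assumes finite_procs: "finite \<Pi>" and live_subset: "L \<subseteq> \<Pi>" and correct_subset: "X \<subseteq> L"
    and enabled_events: "\<And>t. enabled (config_at A V E t) (E t)"
    and actor_alive: "\<And>t. actor (E t) \<in> (if t < T0 then L else X)"
    and fair_events: "fair A V X E"
begin

definition failures :: fpattern where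
  "failures t = (\<Pi> - L) \<union> (if T0 \<le> t then L - X else {})"

definition schedule :: "'m schedule" where
  "schedule t = Some (actor (E t), input_of (config_at A V E t) (E t))"

text \<open>A receipt \<open>Recv p q l i\<close> delivers the \<open>i\<close>-th message of the step of \<open>q\<close> taken when its clock
  read \<open>l\<close>; at other times the value is irrelevant.\<close>

definition send_event :: "nat \<Rightarrow> nat \<times> nat" where
  "send_event t = (case E t of
      Recv p q l i \<Rightarrow> (THE t'. actor (E t') = q \<and> clock (config_at A V E t') q = l, i)
    | _ \<Rightarrow> (0, 0))"

lemma enabled_run_suffix:
  assumes "T0 \<le> T"
  shows "enabled_run A X (config_at A V E T0) (map E [T0..<T])"
  using assms
proof (induction T rule: dec_induct)
  case (step T)
  then show ?case
    using enabled_events[of T] actor_alive[of T] config_at_add[OF step(1), of A V E]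
    by (simp add: not_less)
qed simp

lemma exec_schedule: "exec A V schedule t = state (config_at A V E t)"
  by (induction t) (simp_all add: schedule_def init_config_def step_config_simps step_result_def)

lemma sent_schedule: "sent A V schedule t = outbox A V E t"
  by (simp add: sent_def exec_schedule schedule_def outbox_def step_result_def)

lemma qout_schedule: "qout A V schedule t = query_at A V E t"
  by (simp add: qout_def exec_schedule schedule_def query_at_def step_result_def)

lemma steps_at_schedule: "steps_at schedule p t \<longleftrightarrow> actor (E t) = p"
  by (auto simp: steps_at_def schedule_def)

lemma nq_schedule: "nq A V schedule p t = nqueries (config_at A V E t) p"
proof (induction t)
  case 0
  then show ?case by (simp add: nq_def init_config_def)
next
  case (Suc t)
  have "{t'. t' < Suc t \<and> steps_at schedule p t' \<and> qout A V schedule t' \<noteq> None} =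
      {t'. t' < t \<and> steps_at schedule p t' \<and> qout A V schedule t' \<noteq> None} \<union>
      (if actor (E t) = p \<and> query_at A V E t \<noteq> None then {t} else {})"
    by (auto simp: steps_at_schedule qout_schedule less_Suc_eq)
  then show ?case
    using Suc by (auto simp: nq_def step_config_simps query_at_def)
qed

lemma queried_schedule:
  "queried A V schedule p c v t \<longleftrightarrow>
     actor (E t) = p \<and> query_at A V E t = Some v \<and> nqueries (config_at A V E t) p = c"
  by (auto simp: queried_def steps_at_schedule qout_schedule nq_schedule)

lemma Faulty_failures: "Faulty failures = \<Pi> - X"
  using live_subset correct_subset by (auto simp: Faulty_def failures_def split: if_splits)

lemma failure_pattern_failures: "failure_pattern \<Pi> failures"
  using live_subset by (auto simp: failure_pattern_def mono_def failures_def)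

lemma send_event_Recv:
  assumes "E t = Recv p q l i" "transit (config_at A V E t) (q, l, i) = Some (p, m)"
  shows "\<exists>t'. send_event t = (t', i) \<and> t' < t \<and> actor (E t') = q \<and> clock (config_at A V E t') q = l
    \<and> i < length (outbox A V E t') \<and> outbox A V E t' ! i = (p, m)"
proof -
  obtain t' where t': "t' < t" "actor (E t') = q" "clock (config_at A V E t') q = l"
    "i < length (outbox A V E t')" "outbox A V E t' ! i = (p, m)"
    using transit_source[OF assms(2)] by blast
  have "(THE t'. actor (E t') = q \<and> clock (config_at A V E t') q = l) = t'"
    using t' clock_inj[where E = E and A = A and V = V and q = q] by (intro the_equality) auto
  then show ?thesis
    using t' assms(1) by (auto simp: send_event_def)
qed

lemma Recv_in_transit:
  assumes "E t = Recv p q l i"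
  obtains m where "transit (config_at A V E t) (q, l, i) = Some (p, m)"
  using enabled_events[of t] assms by auto

lemma receipt_matches_send:
  assumes "schedule t = Some (p, InMsg q m)"
  shows "fst (send_event t) < t \<and> steps_at schedule q (fst (send_event t))
    \<and> snd (send_event t) < length (sent A V schedule (fst (send_event t)))
    \<and> sent A V schedule (fst (send_event t)) ! snd (send_event t) = (p, m)"
proof -
  obtain l i where e: "E t = Recv p q l i"
    using assms by (cases "E t") (auto simp: schedule_def)
  obtain m' where c: "transit (config_at A V E t) (q, l, i) = Some (p, m')"
    using Recv_in_transit[OF e] .
  have "m' = m"
    using assms e c by (auto simp: schedule_def)
  then show ?thesis
    using send_event_Recv[OF e c] by (auto simp: sent_schedule steps_at_schedule)
qed

lemma receipt_unique:
  assumes "recv_at schedule t1" "recv_at schedule t2" "send_event t1 = send_event t2"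
  shows "t1 = t2"
proof -
  have receipt: "\<exists>p q l i m. E t = Recv p q l i \<and> transit (config_at A V E t) (q, l, i) = Some (p, m)
      \<and> send_event t = (THE t'. actor (E t') = q \<and> clock (config_at A V E t') q = l, i)"
    if recv: "recv_at schedule t" for t
  proof -
    obtain p q l i where e: "E t = Recv p q l i"
      using recv by (cases "E t") (auto simp: recv_at_def schedule_def)
    then show ?thesis
      using Recv_in_transit[OF e] by (auto simp: send_event_def)
  qed
  obtain p1 q1 l1 i1 m1 where r1: "E t1 = Recv p1 q1 l1 i1"
    "transit (config_at A V E t1) (q1, l1, i1) = Some (p1, m1)"
    using receipt[OF assms(1)] by blast
  obtain p2 q2 l2 i2 m2 where r2: "E t2 = Recv p2 q2 l2 i2"
    "transit (config_at A V E t2) (q2, l2, i2) = Some (p2, m2)"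
    using receipt[OF assms(2)] by blast
  obtain t1' where s1: "send_event t1 = (t1', i1)" "actor (E t1') = q1" "clock (config_at A V E t1') q1 = l1"
    using send_event_Recv[OF r1] by blast
  obtain t2' where s2: "send_event t2 = (t2', i2)" "actor (E t2') = q2" "clock (config_at A V E t2') q2 = l2"
    using send_event_Recv[OF r2] by blast
  have same: "q1 = q2" "l1 = l2" "i1 = i2"
    using s1 s2 assms(3) by auto
  show "t1 = t2"
  proof (rule ccontr)
    assume "t1 \<noteq> t2"
    then consider "t1 < t2" | "t2 < t1"
      by linarith
    then show False
      by cases (use transit_removed_by_receipt r1 r2 same in fastforce)+
  qed
qed

lemma sent_eventually_received:
  assumes "i < length (sent A V schedule t')" "fst (sent A V schedule t' ! i) \<in> \<Pi> - Faulty failures"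
  shows "\<exists>t. recv_at schedule t \<and> send_event t = (t', i)"
proof -
  let ?q = "actor (E t')" and ?l = "clock (config_at A V E t') (actor (E t'))"
  obtain p m where pm: "outbox A V E t' ! i = (p, m)"
    by fastforce
  have "transit (config_at A V E (Suc t')) (?q, ?l, i) = Some (p, m)"
    using transit_outbox[of i A V E t'] assms(1) pm by (simp add: sent_schedule)
  moreover have "p \<in> X"
    using assms(2) pm correct_subset live_subset by (auto simp: sent_schedule Faulty_failures)
  ultimately obtain t where e: "E t = Recv p ?q ?l i"
    using fair_events unfolding fair_def by blast
  obtain m' where "transit (config_at A V E t) (?q, ?l, i) = Some (p, m')"
    using Recv_in_transit[OF e] .
  then obtain t'' where s: "send_event t = (t'', i)" "actor (E t'') = ?q"
    "clock (config_at A V E t'') ?q = ?l"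
    using send_event_Recv[OF e] by blast
  have "t'' = t'"
    using clock_inj[of E t'' ?q t' A V] s by simp
  moreover have "recv_at schedule t"
    by (simp add: recv_at_def schedule_def e)
  ultimately show ?thesis
    using s by blast
qed

lemma answer_follows_query:
  assumes "schedule t = Some (p, InResp c d)"
  shows "d = False \<and> (\<exists>t'<t. \<exists>v. queried A V schedule p c v t')
    \<and> (\<forall>t'' d'. schedule t'' = Some (p, InResp c d') \<longrightarrow> t'' = t)"
proof -
  have answer: "E t = Answer p c \<and> d = False" if "schedule t = Some (p, InResp c d)" for t d
    using that by (cases "E t") (auto simp: schedule_def)
  have e: "E t = Answer p c" "d = False"
    using answer[OF assms] by auto
  have fresh: "c < nqueries (config_at A V E t) p" "c \<notin> answered (config_at A V E t) p"
    using enabled_events[of t] e by auto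
  obtain t' where t': "t' < t" "actor (E t') = p" "query_at A V E t' \<noteq> None"
    "nqueries (config_at A V E t') p = c"
    using query_source[OF fresh(1)] by blast
  have once: "t'' = t" if "schedule t'' = Some (p, InResp c d')" for t'' d'
  proof (rule ccontr)
    assume "t'' \<noteq> t"
    have e'': "E t'' = Answer p c"
      using answer[OF that] by simp
    have after: "c \<in> answered (config_at A V E (Suc t0)) p" if "E t0 = Answer p c" for t0
      using that by (simp add: step_config_simps)
    consider "Suc t \<le> t''" | "Suc t'' \<le> t"
      using \<open>t'' \<noteq> t\<close> by linarith
    then show False
    proof cases
      case 1
      then show False
        using config_at_mono[OF 1, of A V E p] after[OF e(1)] enabled_events[of t''] e'' by auto
    next
      case 2
      then show False
        using config_at_mono[OF 2, of A V E p] after[OF e''] fresh(2) by auto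
    qed
  qed
  show ?thesis
    using e(2) t' once by (auto simp: queried_schedule)
qed

lemma queries_answered:
  assumes "p \<in> \<Pi> - Faulty failures" "Qv A V schedule c p \<noteq> None"
  shows "\<exists>t. schedule t = Some (p, InResp c False)"
proof -
  obtain v t where "queried A V schedule p c v t"
    using assms(2) by (auto simp: Qv_def split: if_splits)
  then have "c < nqueries (config_at A V E (Suc t)) p"
    by (auto simp: queried_schedule step_config_simps query_at_def)
  moreover have "p \<in> X"
    using assms(1) correct_subset live_subset by (auto simp: Faulty_failures)
  ultimately obtain t' where "E t' = Answer p c"
    using fair_events unfolding fair_def by blast
  then have "schedule t' = Some (p, InResp c False)"
    by (simp add: schedule_def)
  then show ?thesis
    by blast
qed

lemma admissible_false_oracle:
  assumes "k \<le> card (\<Pi> - L)"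
  shows "admissible A \<Pi> (kTAg \<Pi> k) f failures V schedule (\<lambda>_. Some False) send_event"
proof -
  have alive: "p \<in> \<Pi> \<and> p \<notin> failures t" if "schedule t = Some (p, e)" for t p e
    using that actor_alive[of t] correct_subset live_subset
    by (auto simp: schedule_def failures_def split: if_splits)
  have correct_steps: "\<exists>t'\<ge>t. steps_at schedule p t'" if "p \<in> \<Pi> - Faulty failures" for p t
    using that fair_events correct_subset live_subset
    by (auto simp: fair_def steps_at_schedule Faulty_failures)
  have "card (\<Pi> - L) \<le> card (Faulty failures)"
    using finite_procs correct_subset by (auto simp: Faulty_failures intro: card_mono)
  then have suitable: "False \<in> kTAg \<Pi> k failures W" for W
    using assms False_in_kTAg by (meson order.trans)
  show ?thesis
    unfolding admissible_def
    using alive correct_steps receipt_matches_send receipt_unique sent_eventually_received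
      answer_follows_query suitable queries_answered
    by (auto dest: answer_follows_query)
qed

end

locale solved_fair_execution = fair_execution +
  fixes P :: problem and k f :: nat
  assumes solves: "solves_with_consistent_oracle A \<Pi> (P, f) (kTAg_task \<Pi> k f)"
    and initially_crashed: "k \<le> card (\<Pi> - L)" and crash_budget: "card (\<Pi> - X) \<le> f"
begin

lemma solution_guarantees:
  "(\<forall>p \<in> X. \<exists>t. decision A (state (config_at A V E t) p) \<noteq> None)
   \<and> (\<forall>p\<in>\<Pi>. \<forall>t t' d. t \<le> t' \<and> decision A (state (config_at A V E t) p) = Some d \<longrightarrow>
         decision A (state (config_at A V E t') p) = Some d)
   \<and> (\<forall>p\<in>\<Pi>. \<forall>q\<in>\<Pi>. \<forall>t t' d d'. decision A (state (config_at A V E t) p) = Some d \<and>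
         decision A (state (config_at A V E t') q) = Some d' \<longrightarrow> d = d')
   \<and> (\<forall>p\<in>\<Pi>. \<forall>t d. decision A (state (config_at A V E t) p) = Some d \<longrightarrow> d \<in> P failures V)"
proof -
  have correct: "\<Pi> - Faulty failures = X"
    using correct_subset live_subset by (auto simp: Faulty_failures)
  have "card (Faulty failures) \<le> f"
    using crash_budget by (simp add: Faulty_failures)
  note run_guarantees = solves[unfolded solves_with_consistent_oracle_def kTAg_task_def fst_conv snd_conv,
      rule_format, OF conjI[OF failure_pattern_failures conjI[OF this admissible_false_oracle]]]
  show ?thesis
    using run_guarantees[OF initially_crashed] unfolding exec_schedule correct .
qed

lemma eventually_decides: "p \<in> X \<Longrightarrow> \<exists>t. decision A (state (config_at A V E t) p) \<noteq> None"
  using solution_guarantees by blast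

lemma decision_stable:
  "p \<in> \<Pi> \<Longrightarrow> t \<le> t' \<Longrightarrow> decision A (state (config_at A V E t) p) = Some d \<Longrightarrow>
    decision A (state (config_at A V E t') p) = Some d"
  using solution_guarantees by blast

lemma decisions_agree:
  "p \<in> \<Pi> \<Longrightarrow> q \<in> \<Pi> \<Longrightarrow> decision A (state (config_at A V E t) p) = Some d \<Longrightarrow>
    decision A (state (config_at A V E t') q) = Some d' \<Longrightarrow> d = d'"
  using solution_guarantees by blast

lemma decision_valid:
  "p \<in> \<Pi> \<Longrightarrow> decision A (state (config_at A V E t) p) = Some d \<Longrightarrow> d \<in> P failures V"
  using solution_guarantees by blast

lemma decides_after:
  assumes "p \<in> X"
  shows "\<exists>T\<ge>t0. \<exists>d. decision A (state (config_at A V E T) p) = Some d"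
proof -
  obtain t d where "decision A (state (config_at A V E t) p) = Some d"
    using eventually_decides[OF assms] by blast
  moreover have "p \<in> \<Pi>"
    using assms correct_subset live_subset by auto
  ultimately show ?thesis
    using decision_stable[of p t "max t t0"] by (intro exI[of _ "max t t0"]) auto
qed

end

section \<open>The FLP argument\<close>

locale kTAg_reduction =
  fixes A :: "('s, 'm) alg" and n k f :: nat and L :: "nat set"
  assumes solves: "solves_with_consistent_oracle A {1..n} (Cons n f) (kTAg_task {1..n} k f)"
    and live_subset: "L \<subseteq> {1..n}" and initially_crashed: "k \<le> card ({1..n} - L)"
    and crash_budget: "card ({1..n} - L) < f" and two_live: "2 \<le> card L"
begin

abbreviation history :: "(nat \<Rightarrow> bool) \<Rightarrow> event list \<Rightarrow> bool" where
  "history V h \<equiv> enabled_run A L (init_config A V) h"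

abbreviation decided :: "(nat \<Rightarrow> bool) \<Rightarrow> event list \<Rightarrow> nat \<Rightarrow> bool \<Rightarrow> bool" where
  "decided V h q d \<equiv> decision A (state (run A (init_config A V) h) q) = Some d"

lemma live_nonempty: "L \<noteq> {}"
  using two_live by auto

lemma solved_fair_execution_intro:
  assumes "\<forall>t. enabled (config_at A V E t) (E t)" "\<forall>t. actor (E t) \<in> (if t < T0 then L else X)"
    and "fair A V X E" "X \<subseteq> L" "card (L - X) \<le> 1"
  shows "solved_fair_execution A V E {1..n} L X T0 (kTAg {1..n} n) k f"
proof unfold_locales
  have "{1..n} - X = ({1..n} - L) \<union> (L - X)" "({1..n} - L) \<inter> (L - X) = {}"
    using assms(4) live_subset by auto
  moreover have "finite (L - X)"
    using live_subset finite_subset by blast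
  ultimately show "card ({1..n} - X) \<le> f"
    using card_Un_disjoint[of "{1..n} - L" "L - X"] crash_budget assms(5) by simp
  show "solves_with_consistent_oracle A {1..n} (kTAg {1..n} n, f) (kTAg_task {1..n} k f)"
    using solves by (simp add: Cons_def kTAg_task_def)
qed (use assms live_subset initially_crashed in auto)

lemma fair_extension:
  assumes "history V h0" "X \<subseteq> L" "X \<noteq> {}" "card (L - X) \<le> 1"
  obtains E where "solved_fair_execution A V E {1..n} L X (length h0) (kTAg {1..n} n) k f"
    and "map E [0..<length h0] = h0"
proof -
  have "\<exists>ys. enabled_run A X (run A (init_config A V) h) (ys @ [e]) \<and> history V (h @ ys @ [e])"
    if "history V h" "enabled (run A (init_config A V) h) e" "actor e \<in> X" for h e
    using that assms(2) by (intro exI[of _ "[]"]) auto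
  note fair_execution_exists[of X A L V h0 "history V", OF assms(3,1,1) this]
  then obtain E where E: "\<forall>t. enabled (config_at A V E t) (E t)"
    "\<forall>t. actor (E t) \<in> (if t < length h0 then L else X)" "fair A V X E" "\<forall>t<length h0. E t = h0 ! t"
    by blast
  have "map E [0..<length h0] = h0"
    using E(4) by (intro nth_equalityI) auto
  then show ?thesis
    using that solved_fair_execution_intro[OF E(1-3) assms(2,4)] by blast
qed

lemma decision_persists:
  assumes "history V (xs @ ys)" "q \<in> {1..n}" "decided V xs q d"
  shows "decided V (xs @ ys) q d"
proof -
  obtain E where E: "solved_fair_execution A V E {1..n} L L (length (xs @ ys)) (kTAg {1..n} n) k f"
    "map E [0..<length (xs @ ys)] = xs @ ys"
    using fair_extension[OF assms(1) order_refl live_nonempty] by auto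
  show ?thesis
    using solved_fair_execution.decision_stable[OF E(1) assms(2), of "length xs" "length (xs @ ys)"]
      assms(3) by (simp add: config_at_eq_run_take[OF E(2)])
qed

lemma decided_agree:
  assumes "history V h" "q \<in> {1..n}" "q' \<in> {1..n}" "decided V h q d" "decided V h q' d'"
  shows "d = d'"
proof -
  obtain E where E: "solved_fair_execution A V E {1..n} L L (length h) (kTAg {1..n} n) k f"
    "map E [0..<length h] = h"
    using fair_extension[OF assms(1) order_refl live_nonempty] by auto
  show ?thesis
    using solved_fair_execution.decisions_agree[OF E(1) assms(2,3), of "length h" d "length h" d']
      assms(4,5) by (simp add: config_at_eq_run_take[OF E(2)])
qed

lemma decided_valid:
  assumes "history V h" "q \<in> {1..n}" "decided V h q d"
  shows "d \<in> kTAg {1..n} n (\<lambda>_. {1..n} - L) V"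
proof -
  obtain E where E: "solved_fair_execution A V E {1..n} L L (length h) (kTAg {1..n} n) k f"
    "map E [0..<length h] = h"
    using fair_extension[OF assms(1) order_refl live_nonempty] by auto
  have "fair_execution.failures {1..n} L L (length h) = (\<lambda>_. {1..n} - L)"
    using fair_execution.failures_def[OF solved_fair_execution.axioms(1)[OF E(1)]] by (simp add: fun_eq_iff)
  then show ?thesis
    using solved_fair_execution.decision_valid[OF E(1) assms(2), of "length h" d] assms(3)
    by (simp add: config_at_eq_run_take[OF E(2)])
qed

lemma live_remove_nonempty:
  assumes "p \<in> L"
  shows "L - {p} \<noteq> {}"
proof
  assume "L - {p} = {}"
  then have "card L \<le> card {p}"
    by (intro card_mono) auto
  then show False
    using two_live by simp
qed

lemma decision_without:
  assumes "history V xs" "p \<in> L"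
  obtains ys q d where "enabled_run A (L - {p}) (run A (init_config A V) xs) ys" "q \<in> L - {p}"
    "decided V (xs @ ys) q d"
proof -
  obtain q where q: "q \<in> L - {p}"
    using live_remove_nonempty[OF assms(2)] by blast
  have "card (L - (L - {p})) \<le> card {p}"
    by (intro card_mono) auto
  then obtain E where E: "solved_fair_execution A V E {1..n} L (L - {p}) (length xs) (kTAg {1..n} n) k f"
    "map E [0..<length xs] = xs"
    using fair_extension[OF assms(1) _ live_remove_nonempty[OF assms(2)]] by auto
  interpret solved_fair_execution A V E "{1..n}" L "L - {p}" "length xs" "kTAg {1..n} n" k f
    using E(1) .
  obtain T d where T: "length xs \<le> T" "decision A (state (config_at A V E T) q) = Some d"
    using decides_after[OF q] by blast
  define ys where "ys = map E [length xs..<T]"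
  have start: "config_at A V E (length xs) = run A (init_config A V) xs"
    by (simp add: config_at_eq_run_take[OF E(2)])
  then have "config_at A V E T = run A (init_config A V) (xs @ ys)"
    using config_at_add[OF T(1), of A V E] unfolding ys_def by simp
  then have "decided V (xs @ ys) q d"
    using T(2) by simp
  moreover have "enabled_run A (L - {p}) (run A (init_config A V) xs) ys"
    using enabled_run_suffix[OF T(1)] start unfolding ys_def by simp
  ultimately show ?thesis
    using that q by blast
qed

definition valent :: "(nat \<Rightarrow> bool) \<Rightarrow> event list \<Rightarrow> bool \<Rightarrow> bool" where
  "valent V h d \<longleftrightarrow> (\<exists>ys. enabled_run A L (run A (init_config A V) h) ys \<and>
      (\<exists>q\<in>{1..n}. decided V (h @ ys) q d))"

definition bivalent :: "(nat \<Rightarrow> bool) \<Rightarrow> event list \<Rightarrow> bool" where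
  "bivalent V h \<longleftrightarrow> valent V h False \<and> valent V h True"

lemma valent_decided:
  assumes "history V h" "q \<in> {1..n}" "decided V h q d" "valent V h d'"
  shows "d' = d"
proof -
  obtain ys q' where ys: "enabled_run A L (run A (init_config A V) h) ys" "q' \<in> {1..n}"
    "decided V (h @ ys) q' d'"
    using assms(4) unfolding valent_def by blast
  then have "decided V (h @ ys) q d"
    using decision_persists assms(1-3) by simp
  then show ?thesis
    using decided_agree[of V "h @ ys" q' q d' d] ys assms(1,2) by simp
qed

lemma decided_not_bivalent:
  assumes "history V h" "q \<in> {1..n}" "decided V h q d"
  shows "\<not> bivalent V h"
  using valent_decided[OF assms] unfolding bivalent_def by (metis (full_types))

lemma valent_exists:
  assumes "history V h"
  shows "\<exists>d. valent V h d"
proof -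
  obtain p where "p \<in> L"
    using live_nonempty by blast
  then obtain ys q d where "enabled_run A (L - {p}) (run A (init_config A V) h) ys" "q \<in> L - {p}"
    "decided V (h @ ys) q d"
    using decision_without[OF assms] by blast
  then show ?thesis
    unfolding valent_def using live_subset by (blast intro: enabled_run_mono)
qed

lemma univalent_iff:
  assumes "history V h" "\<not> bivalent V h" "valent V h d"
  shows "valent V h d' \<longleftrightarrow> d' = d"
  using assms unfolding bivalent_def by (cases d; cases d') auto

lemma valent_swap:
  assumes "history V h" and c: "c = run A (init_config A V) h"
    and "enabled c e" "enabled c a" "actor a \<noteq> actor e" "actor a \<in> L" "valent V (h @ [a, e]) d"
  shows "valent V (h @ [e]) d"
proof -
  obtain ws q where ws: "enabled_run A L (run A (init_config A V) (h @ [a, e])) ws" "q \<in> {1..n}"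
    "decided V (h @ [a, e] @ ws) q d"
    using assms(7) unfolding valent_def by auto
  have "step_config A (step_config A c e) a = step_config A (step_config A c a) e"
    using step_config_commute[OF assms(3,4)] assms(5) transit_from_past_reachable c
    by metis
  moreover have "enabled (step_config A c e) a"
    using enabled_after_other_event[OF assms(4,3)] assms(5) transit_from_past_reachable c
    by metis
  ultimately show ?thesis
    unfolding valent_def using ws assms(6) c by (intro exI[of _ "a # ws"]) auto
qed

lemma valent_after_own_events:
  assumes "history V h" "p \<in> L" "enabled_run A (L - {p}) (run A (init_config A V) h) ws"
    and "q \<in> {1..n}" "decided V (h @ ws) q d" "enabled_run A {p} (run A (init_config A V) h) zs"
  shows "valent V (h @ zs) d"
proof -
  let ?c = "run A (init_config A V) h"
  have "transit_from_past ?c"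
    using transit_from_past_reachable .
  then have swap: "enabled_run A {p} (run A ?c ws) zs" "enabled_run A (L - {p}) (run A ?c zs) ws"
    "run A (run A ?c zs) ws = run A (run A ?c ws) zs"
    using runs_commute[OF assms(3,6)] by auto
  have "history V ((h @ ws) @ zs)"
    using assms(1,2,3) swap(1) by (auto intro: enabled_run_mono)
  then have "decided V ((h @ ws) @ zs) q d"
    using decision_persists assms(4,5) by blast
  then show ?thesis
    unfolding valent_def using assms(4) swap(2,3) by (auto intro!: exI[of _ ws] intro: enabled_run_mono)
qed

text \<open>If the common actor of \<open>a\<close> and \<open>e\<close> crashes, the others cannot tell \<open>h @ [e]\<close> from
  \<open>h @ [a, e]\<close>.\<close>

lemma valent_same_actor:
  assumes "history V h" and c: "c = run A (init_config A V) h"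
    and "enabled c e" "enabled c a" "a \<noteq> e" "actor a = actor e" "actor e \<in> L"
  shows "\<exists>d. valent V (h @ [e]) d \<and> valent V (h @ [a, e]) d"
proof -
  obtain ws q d where ws: "enabled_run A (L - {actor e}) c ws" "q \<in> L - {actor e}" "decided V (h @ ws) q d"
    using decision_without[OF assms(1) assms(7)] c by metis
  have q: "q \<in> {1..n}"
    using ws(2) live_subset by auto
  have "enabled (step_config A c a) e"
    using enabled_after_other_event[OF assms(3,4,5)] transit_from_past_reachable c
    by metis
  then have "enabled_run A {actor e} c [e]" "enabled_run A {actor e} c [a, e]"
    using assms(3,4,6) by auto
  then show ?thesis
    using valent_after_own_events[OF assms(1,7) _ q ws(3)] ws(1) c by blast
qed

lemma neighbours_share_valence:
  assumes "history V h" and c: "c = run A (init_config A V) h"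
    and "enabled c e" "enabled c a" "a \<noteq> e" "actor a \<in> L" "actor e \<in> L"
  shows "\<exists>d. valent V (h @ [e]) d \<and> valent V (h @ [a, e]) d"
proof (cases "actor a = actor e")
  case True
  then show ?thesis
    using valent_same_actor[OF assms(1-5)] assms(7) by blast
next
  case False
  have "enabled (step_config A c a) e"
    using enabled_after_other_event[OF assms(3,4,5)] transit_from_past_reachable c
    by metis
  then have "history V (h @ [a, e])"
    using assms c by simp
  then obtain d where "valent V (h @ [a, e]) d"
    using valent_exists by blast
  then show ?thesis
    using valent_swap[OF assms(1,2,3,4) False assms(6)] by blast
qed

lemma valent_before_event:
  assumes "history V h" "enabled (run A (init_config A V) h) e" "actor e \<in> L" "valent V h d"
  shows "\<exists>ys. enabled_run A L (run A (init_config A V) h) ys \<and> e \<notin> set ys \<and> valent V (h @ ys @ [e]) d"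
proof -
  let ?c = "run A (init_config A V) h"
  obtain zs q where zs: "enabled_run A L ?c zs" "q \<in> {1..n}" "decided V (h @ zs) q d"
    using assms(4) unfolding valent_def by blast
  show ?thesis
  proof (cases "e \<in> set zs")
    case False
    have "enabled (run A ?c zs) e"
      using enabled_after_run[OF assms(2) zs(1) False transit_from_past_reachable] .
    then have "decided V ((h @ zs) @ [e]) q d"
      using decision_persists[of V "h @ zs" "[e]"] assms(1,3) zs by simp
    then have "valent V (h @ zs @ [e]) d"
      unfolding valent_def using zs(2) by (intro exI[of _ "[]"]) auto
    then show ?thesis
      using zs(1) False by blast
  next
    case True
    then obtain ys ws where split: "zs = ys @ e # ws" "e \<notin> set ys"
      by (meson split_list_first)
    then have "valent V (h @ ys @ [e]) d"
      unfolding valent_def using zs by (intro exI[of _ ws]) auto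
    then show ?thesis
      using zs(1) split by auto
  qed
qed

lemma delayed_event_keeps_valence:
  assumes "history V h" "enabled (run A (init_config A V) h) e" "actor e \<in> L"
    and univalent: "\<And>ys. enabled_run A L (run A (init_config A V) h) ys \<Longrightarrow> e \<notin> set ys \<Longrightarrow>
      \<not> bivalent V (h @ ys @ [e])"
    and "enabled_run A L (run A (init_config A V) h) ys" "e \<notin> set ys" "valent V (h @ [e]) d"
  shows "valent V (h @ ys @ [e]) d"
  using assms(5-7)
proof (induction ys rule: rev_induct)
  case Nil
  then show ?case by simp
next
  case (snoc a P)
  let ?c = "run A (init_config A V) h"
  have P: "enabled_run A L ?c P" "e \<notin> set P" and a: "enabled (run A ?c P) a" "actor a \<in> L" "a \<noteq> e"
    using snoc.prems by auto
  have hP: "history V (h @ P)" "run A ?c P = run A (init_config A V) (h @ P)"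
    using assms(1) P(1) by simp_all
  have "transit_from_past ?c"
    using transit_from_past_reachable .
  then have e: "enabled (run A ?c P) e"
    using enabled_after_run[OF assms(2) P] by blast
  obtain d' where d': "valent V (h @ P @ [e]) d'" "valent V (h @ P @ [a, e]) d'"
    using neighbours_share_valence[OF hP e a(1,3,2) assms(3)] by auto
  have "history V (h @ P @ [e])"
    using hP e assms(3) by simp
  then have "d' = d"
    using univalent_iff[OF _ univalent[OF P] snoc.IH[OF P snoc.prems(3)]] d'(1) by simp
  then show ?case
    using d'(2) by simp
qed

text \<open>Otherwise the valence of \<open>h @ [e]\<close> would be kept by \<open>h @ ys @ [e]\<close> for every \<open>e\<close>-free \<open>ys\<close>,
  yet some of them have the other valence because \<open>h\<close> is bivalent.\<close>

lemma bivalent_extension: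
  assumes "history V h" "bivalent V h" "enabled (run A (init_config A V) h) e" "actor e \<in> L"
  shows "\<exists>ys. enabled_run A L (run A (init_config A V) h) (ys @ [e]) \<and> bivalent V (h @ ys @ [e])"
proof (rule ccontr)
  assume no_bivalent: "\<not> ?thesis"
  let ?c = "run A (init_config A V) h"
  have "transit_from_past ?c"
    using transit_from_past_reachable .
  then have univalent: "\<not> bivalent V (h @ ys @ [e])" if "enabled_run A L ?c ys" "e \<notin> set ys" for ys
    using no_bivalent enabled_after_run[OF assms(3) that] that(1) assms(4) by auto
  obtain d where d: "valent V (h @ [e]) d"
    using valent_exists[of V "h @ [e]"] assms(1,3,4) by auto
  have "valent V h (\<not> d)"
    using assms(2) unfolding bivalent_def by (cases d) auto
  then obtain ys where ys: "enabled_run A L ?c ys" "e \<notin> set ys" "valent V (h @ ys @ [e]) (\<not> d)"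
    using valent_before_event[OF assms(1,3,4)] by blast
  moreover have "valent V (h @ ys @ [e]) d"
    using delayed_event_keeps_valence[OF assms(1,3,4) univalent ys(1,2) d] .
  ultimately show False
    using univalent[OF ys(1,2)] unfolding bivalent_def by (cases d) auto
qed

text \<open>Runs in which \<open>j\<close> never steps cannot tell \<open>V\<close> from \<open>V(j := b)\<close>.\<close>

lemma neighbour_inputs_share_valence: "\<exists>d. valent V [] d \<and> valent (V(j := b)) [] d"
proof -
  obtain p where p: "p \<in> L" "j \<notin> L - {p}"
    using live_nonempty by (cases "j \<in> L") auto
  obtain ws q d where ws: "enabled_run A (L - {p}) (init_config A V) ws" "q \<in> L - {p}" "decided V ws q d"
    using decision_without[of V "[]" p] p(1) by auto
  have moved: "enabled_run A (L - {p}) (init_config A (V(j := b))) ws \<and>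
      run A (init_config A (V(j := b))) ws = set_state (run A (init_config A V) ws) j (ini A j b)"
    unfolding init_config_update using run_set_state[OF ws(1) p(2)] .
  have "q \<noteq> j" "q \<in> {1..n}"
    using ws(2) p(2) live_subset by auto
  then have "decided (V(j := b)) ws q d"
    using moved ws(3) by (simp add: set_state_def)
  moreover have "history V ws" "history (V(j := b)) ws"
    using ws(1) moved by (auto intro: enabled_run_mono)
  ultimately have "valent V [] d" "valent (V(j := b)) [] d"
    unfolding valent_def using ws(3) \<open>q \<in> {1..n}\<close> by (auto intro!: exI[of _ ws] bexI[of _ q])
  then show ?thesis
    by blast
qed

lemma bivalent_initial: "\<exists>V. bivalent V []"
proof (rule ccontr)
  assume no_bivalent: "\<nexists>V. bivalent V []"
  define W where "W j = (\<lambda>p::nat. p \<le> j)" for j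
  have valid: "d \<in> kTAg {1..n} n (\<lambda>_. {1..n} - L) V" if "valent V [] d" for V d
    using that decided_valid unfolding valent_def by auto
  have "valent (W j) [] False" for j
  proof (induction j)
    case 0
    obtain d where d: "valent (W 0) [] d"
      using valent_exists[of "W 0" "[]"] by auto
    have "{p \<in> {1..n}. \<not> W 0 p} = {1..n}"
      by (auto simp: W_def)
    then have "kTAg {1..n} n (\<lambda>_. {1..n} - L) (W 0) = {False}"
      by (simp add: kTAg_def)
    then show ?case
      using valid[OF d] d by simp
  next
    case (Suc j)
    have "W (Suc j) = (W j)(Suc j := True)"
      by (auto simp: W_def fun_eq_iff)
    then obtain d where d: "valent (W j) [] d" "valent (W (Suc j)) [] d"
      using neighbour_inputs_share_valence[of "W j" "Suc j" True] by auto
    have "d = False"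
      using univalent_iff[of "W j" "[]" False d] Suc.IH no_bivalent d(1) by simp
    then show ?case
      using d(2) by simp
  qed
  then have "False \<in> kTAg {1..n} n (\<lambda>_. {1..n} - L) (W n)"
    using valid by blast
  moreover have "kTAg {1..n} n (\<lambda>_. {1..n} - L) (W n) = {True}"
  proof -
    have "card L \<le> n"
      using card_mono[OF _ live_subset] by simp
    moreover have "card ({1..n} - L) = n - card L"
      using card_Diff_subset[OF finite_subset[OF live_subset] live_subset] by simp
    moreover have "{p \<in> {1..n}. \<not> W n p} = {}"
      by (auto simp: W_def)
    ultimately show ?thesis
      using two_live by (simp add: kTAg_def W_def Faulty_def)
  qed
  ultimately show False
    by simp
qed

lemma no_reduction: False
proof -
  obtain V where V: "bivalent V []"
    using bivalent_initial by blast
  have "\<exists>ys. enabled_run A L (run A (init_config A V) h) (ys @ [e])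
      \<and> history V (h @ ys @ [e]) \<and> bivalent V (h @ ys @ [e])"
    if "history V h \<and> bivalent V h" "enabled (run A (init_config A V) h) e" "actor e \<in> L" for h e
    using bivalent_extension[of V h e] that by auto
  note fair_execution_exists[of L A L V "[]" "\<lambda>h. history V h \<and> bivalent V h", OF live_nonempty _ _ this]
  then obtain E where E: "\<forall>t. enabled (config_at A V E t) (E t)" "\<forall>t. actor (E t) \<in> L" "fair A V L E"
    "\<forall>T. \<exists>t\<ge>T. history V (map E [0..<t]) \<and> bivalent V (map E [0..<t])"
    using V by auto
  interpret solved_fair_execution A V E "{1..n}" L L 0 "kTAg {1..n} n" k f
    using solved_fair_execution_intro[OF E(1) _ E(3)] E(2) by simp
  obtain p where p: "p \<in> L"
    using live_nonempty by blast
  then obtain t d where "decision A (state (config_at A V E t) p) = Some d"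
    using eventually_decides by blast
  moreover obtain t' where t': "t \<le> t'" "history V (map E [0..<t'])" "bivalent V (map E [0..<t'])"
    using E(4) by blast
  ultimately have "decided V (map E [0..<t']) p d"
    using decision_stable p live_subset by (auto simp: config_at_eq_run)
  then show False
    using decided_not_bivalent t' p live_subset by auto
qed

end

theorem mainTheorem11:
  fixes k f n :: nat and A :: "('s, 'm) alg"
  assumes "1 \<le> k" and "k + 1 \<le> f" and "f + 1 \<le> n"
  shows "\<not> solves_with_consistent_oracle A {1..n} (Cons n f) (kTAg_task {1..n} k f)"
proof
  assume "solves_with_consistent_oracle A {1..n} (Cons n f) (kTAg_task {1..n} k f)"
  moreover have "{1..n} - {k + 1..n} = {1..k}"
    using assms by auto
  ultimately interpret kTAg_reduction A n k f "{k + 1..n}"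
    using assms by unfold_locales auto
  show False
    by (rule no_reduction)
qed

end
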